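(* For every command $c$ of the While-language, stores $\sigma,\sigma'$ and status flag $\delta$: if $(c,\sigma,\Downarrow)\Rightarrow^{co}_G\sigma',\delta$ and not $(c,\sigma,\Downarrow)\Rightarrow_G\sigma',\delta$, then $(c,\sigma,\Downarrow)\Rightarrow^{co}_G\sigma',\Uparrow$.
   Context: While-language syntax: variables $x$ range over a countably infinite set $\mathit{Var}$; $n$ ranges over natural numbers; values are $v ::= \mathsf{null}\mid n$ ($\mathsf{null}$ distinct from every natural number); expressions are $e ::= v\mid x\mid e_1\oplus e_2$ with $\oplus\in\{+,-,*\}$, where $\oplus(n_1,n_2)$ is the result of the operation on naturals; commands are $c ::= \mathsf{skip}\mid\mathsf{alloc}\ x\mid x:=e\mid c_1;c_2\mid \mathsf{if}\ e\ c_1\ c_2\mid\mathsf{while}\ e\ c$. A store $\sigma$ is a finite partial map from $\mathit{Var}$ to values, with domain $\mathrm{dom}(\sigma)$, lookup $\sigma(x)$, update $\sigma[x\mapsto v]$. Flag-based big-step semantics: status flags $\delta ::= \Downarrow\mid\Uparrow$ (convergent / divergent). Expression evaluation $(e,\sigma,\delta)\Rightarrow_{GE}v,\delta'$ is the least relation with: $(v,\sigma,\Downarrow)\Rightarrow_{GE}v,\Downarrow$; $(x,\sigma,\Downarrow)\Rightarrow_{GE}\sigma(x),\Downarrow$ if $x\in\mathrm{dom}(\sigma)$; if $(e_1,\sigma,\Downarrow)\Rightarrow_{GE}n_1,\delta$ and $(e_2,\sigma,\delta)\Rightarrow_{GE}n_2,\delta'$ ($n_1,n_2$ naturals) then $(e_1\oplus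 e_2,\sigma,\Downarrow)\Rightarrow_{GE}\oplus(n_1,n_2),\delta'$; and $(e,\sigma,\Uparrow)\Rightarrow_{GE}v,\Uparrow$ for every value $v$. The command rules for judgments $(c,\sigma,\delta)\Rightarrow_G\sigma',\delta'$ are: $(\mathsf{skip},\sigma,\Downarrow)\Rightarrow_G\sigma,\Downarrow$; $(\mathsf{alloc}\ x,\sigma,\Downarrow)\Rightarrow_G\sigma[x\mapsto\mathsf{null}],\Downarrow$ if $x\notin\mathrm{dom}(\sigma)$; $(x:=e,\sigma,\Downarrow)\Rightarrow_G\sigma[x\mapsto v],\delta$ if $x\in\mathrm{dom}(\sigma)$ and $(e,\sigma,\Downarrow)\Rightarrow_{GE}v,\delta$; $(c_1;c_2,\sigma,\Downarrow)\Rightarrow_G\sigma'',\delta'$ if $(c_1,\sigma,\Downarrow)\Rightarrow_G\sigma',\delta$ and $(c_2,\sigma',\delta)\Rightarrow_G\sigma'',\delta'$; $(\mathsf{if}\ e\ c_1\ c_2,\sigma,\Downarrow)\Rightarrow_G\sigma',\delta'$ if $v\ne0$, $(e,\sigma,\Downarrow)\Rightarrow_{GE}v,\delta$ and $(c_1,\sigma,\delta)\Rightarrow_G\sigma',\delta'$; $(\mathsf{if}\ e\ c_1\ c_2,\sigma,\Downarrow)\Rightarrow_G\sigma',\delta'$ if $(e,\sigma,\Downarrow)\Rightarrow_{GE}0,\delta$ and $(c_2,\sigma,\delta)\Rightarrow_G\sigma',\delta'$; $(\mathsf{while}\ e\ c,\sigma,\Downarrow)\Rightarrow_G\sigma'',\delta''$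 if $(e,\sigma,\Downarrow)\Rightarrow_{GE}v,\delta$, $v\ne0$, $(c,\sigma,\delta)\Rightarrow_G\sigma',\delta'$ and $(\mathsf{while}\ e\ c,\sigma',\delta')\Rightarrow_G\sigma'',\delta''$; $(\mathsf{while}\ e\ c,\sigma,\Downarrow)\Rightarrow_G\sigma,\delta$ if $(e,\sigma,\Downarrow)\Rightarrow_{GE}0,\delta$; $(c,\sigma,\Uparrow)\Rightarrow_G\sigma',\Uparrow$ for every store $\sigma'$. $\Rightarrow_G$ is the inductive interpretation (least relation closed under these rules) and $\Rightarrow^{co}_G$ the coinductive interpretation of the same rules (greatest relation such that every element is the conclusion of a rule instance whose command premises lie in it). *)

theory Defs
  imports Main "HOL-Library.Finite_Map"
begin

type_synonym var = nat

datatype val = Null | Num nat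

datatype bop = Plus | Minus | Times

fun bop_sem :: "bop \<Rightarrow> nat \<Rightarrow> nat \<Rightarrow> nat" where
  "bop_sem Plus a b = a + b"
| "bop_sem Minus a b = a - b"
| "bop_sem Times a b = a * b"

datatype exp = V val | Var var | Op bop exp exp

datatype com = Skip | Alloc var | Assign var exp | Seq com com
  | If exp com com | While exp com

datatype flag = Conv | Div

type_synonym store = "(var, val) fmap"

inductive GE :: "exp \<Rightarrow> store \<Rightarrow> flag \<Rightarrow> val \<Rightarrow> flag \<Rightarrow> bool" where
  ge_val: "GE (V v) \<sigma> Conv v Conv"
| ge_var: "x |\<in>| fmdom \<sigma> \<Longrightarrow> GE (Var x) \<sigma> Conv (the (fmlookup \<sigma> x)) Conv"
| ge_op: "GE e1 \<sigma> Conv (Num n1) d \<Longrightarrow> GE e2 \<sigma> d (Num n2) d' \<Longrightarrow>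
          GE (Op op e1 e2) \<sigma> Conv (Num (bop_sem op n1 n2)) d'"
| ge_div: "GE e \<sigma> Div v Div"

inductive G :: "com \<Rightarrow> store \<Rightarrow> flag \<Rightarrow> store \<Rightarrow> flag \<Rightarrow> bool" where
  g_skip: "G Skip \<sigma> Conv \<sigma> Conv"
| g_alloc: "x |\<notin>| fmdom \<sigma> \<Longrightarrow> G (Alloc x) \<sigma> Conv (fmupd x Null \<sigma>) Conv"
| g_assign: "x |\<in>| fmdom \<sigma> \<Longrightarrow> GE e \<sigma> Conv v d \<Longrightarrow> G (Assign x e) \<sigma> Conv (fmupd x v \<sigma>) d"
| g_seq: "G c1 \<sigma> Conv \<sigma>' d \<Longrightarrow> G c2 \<sigma>' d \<sigma>'' d' \<Longrightarrow> G (Seq c1 c2) \<sigma> Conv \<sigma>'' d'"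
| g_if_t: "v \<noteq> Num 0 \<Longrightarrow> GE e \<sigma> Conv v d \<Longrightarrow> G c1 \<sigma> d \<sigma>' d' \<Longrightarrow> G (If e c1 c2) \<sigma> Conv \<sigma>' d'"
| g_if_f: "GE e \<sigma> Conv (Num 0) d \<Longrightarrow> G c2 \<sigma> d \<sigma>' d' \<Longrightarrow> G (If e c1 c2) \<sigma> Conv \<sigma>' d'"
| g_while_t: "GE e \<sigma> Conv v d \<Longrightarrow> v \<noteq> Num 0 \<Longrightarrow> G c \<sigma> d \<sigma>' d' \<Longrightarrow>
              G (While e c) \<sigma>' d' \<sigma>'' d'' \<Longrightarrow> G (While e c) \<sigma> Conv \<sigma>'' d''"
| g_while_f: "GE e \<sigma> Conv (Num 0) d \<Longrightarrow> G (While e c) \<sigma> Conv \<sigma> d"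
| g_div: "G c \<sigma> Div \<sigma>' Div"

coinductive Gco :: "com \<Rightarrow> store \<Rightarrow> flag \<Rightarrow> store \<Rightarrow> flag \<Rightarrow> bool" where
  gco_skip: "Gco Skip \<sigma> Conv \<sigma> Conv"
| gco_alloc: "x |\<notin>| fmdom \<sigma> \<Longrightarrow> Gco (Alloc x) \<sigma> Conv (fmupd x Null \<sigma>) Conv"
| gco_assign: "x |\<in>| fmdom \<sigma> \<Longrightarrow> GE e \<sigma> Conv v d \<Longrightarrow> Gco (Assign x e) \<sigma> Conv (fmupd x v \<sigma>) d"
| gco_seq: "Gco c1 \<sigma> Conv \<sigma>' d \<Longrightarrow> Gco c2 \<sigma>' d \<sigma>'' d' \<Longrightarrow> Gco (Seq c1 c2) \<sigma> Conv \<sigma>'' d'"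
| gco_if_t: "v \<noteq> Num 0 \<Longrightarrow> GE e \<sigma> Conv v d \<Longrightarrow> Gco c1 \<sigma> d \<sigma>' d' \<Longrightarrow> Gco (If e c1 c2) \<sigma> Conv \<sigma>' d'"
| gco_if_f: "GE e \<sigma> Conv (Num 0) d \<Longrightarrow> Gco c2 \<sigma> d \<sigma>' d' \<Longrightarrow> Gco (If e c1 c2) \<sigma> Conv \<sigma>' d'"
| gco_while_t: "GE e \<sigma> Conv v d \<Longrightarrow> v \<noteq> Num 0 \<Longrightarrow> Gco c \<sigma> d \<sigma>' d' \<Longrightarrow>
              Gco (While e c) \<sigma>' d' \<sigma>'' d'' \<Longrightarrow> Gco (While e c) \<sigma> Conv \<sigma>'' d''"
| gco_while_f: "GE e \<sigma> Conv (Num 0) d \<Longrightarrow> Gco (While e c) \<sigma> Conv \<sigma> d"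
| gco_div: "Gco c \<sigma> Div \<sigma>' Div"

end

theory Submission
  imports Defs
begin

text \<open>A coinductive derivation without inductive counterpart has an infinite branch, running
  through sequential compositions and loop iterations.  Along that branch the final flag can be
  replaced by divergence: premises that are inductively derivable are kept, the first premise that
  is not is continued coinductively, and every premise after it starts from the divergent flag and
  is closed by the divergence rule.\<close>

lemma Gco_not_G_imp_Gco_Div:
  assumes "Gco c \<sigma> \<delta>\<^sub>0 \<sigma>' \<delta>" and "\<not> G c \<sigma> \<delta>\<^sub>0 \<sigma>' \<delta>"
  shows "Gco c \<sigma> \<delta>\<^sub>0 \<sigma>' Div"
  using assms
proof (coinduction arbitrary: c \<sigma> \<delta>\<^sub>0 \<sigma>' \<delta>)
  case (Gco c \<sigma> \<delta>\<^sub>0 \<sigma>' \<delta>)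
  from Gco(1) show ?case
  proof cases
    case (gco_seq c1 \<sigma>\<^sub>1 \<delta>\<^sub>1 c2)
    show ?thesis
    proof (cases "G c1 \<sigma> Conv \<sigma>\<^sub>1 \<delta>\<^sub>1")
      case True
      with gco_seq Gco(2) have "\<not> G c2 \<sigma>\<^sub>1 \<delta>\<^sub>1 \<sigma>' \<delta>" by (auto intro: G.g_seq)
      with gco_seq True show ?thesis by force
    next
      case False
      with gco_seq show ?thesis by (auto intro: Gco.gco_div)
    qed
  next
    case (gco_if_t v e \<delta>\<^sub>1 c1 c2)
    with Gco(2) have "\<not> G c1 \<sigma> \<delta>\<^sub>1 \<sigma>' \<delta>" by (auto intro: G.g_if_t)
    with gco_if_t show ?thesis by force
  next
    case (gco_if_f e \<delta>\<^sub>1 c2 c1)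
    with Gco(2) have "\<not> G c2 \<sigma> \<delta>\<^sub>1 \<sigma>' \<delta>" by (auto intro: G.g_if_f)
    with gco_if_f show ?thesis by force
  next
    case (gco_while_t e v \<delta>\<^sub>1 cb \<sigma>\<^sub>1 \<delta>\<^sub>2)
    show ?thesis
    proof (cases "G cb \<sigma> \<delta>\<^sub>1 \<sigma>\<^sub>1 \<delta>\<^sub>2")
      case True
      with gco_while_t Gco(2) have "\<not> G (While e cb) \<sigma>\<^sub>1 \<delta>\<^sub>2 \<sigma>' \<delta>"
        by (auto intro: G.g_while_t)
      with gco_while_t True show ?thesis by force
    next
      case False
      with gco_while_t show ?thesis by (force intro: Gco.gco_div)
    qed
  qed (use Gco(2) in \<open>auto intro: G.intros\<close>)
qed

theorem lemma19:
  fixes c :: com and \<sigma> \<sigma>' :: store and \<delta> :: flag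
  assumes "Gco c \<sigma> Conv \<sigma>' \<delta>"
      and "\<not> G c \<sigma> Conv \<sigma>' \<delta>"
  shows "Gco c \<sigma> Conv \<sigma>' Div"
  using assms by (rule Gco_not_G_imp_Gco_Div)

end
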